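(* Let $\Pi$ be the elliptic curve $u^2=s(s^2+s+7)$ and define rational functions on $\Pi$ $$y=\frac12-\frac{(3s^8-2s^7-4s^6-204s^5-536s^4-1738s^3-5064s^2-4808s-3199)\,u}{4(s^6+196s^3+189s^2+756s+154)(s^2+s+7)(s+1)},$$ $$t=\frac12-\frac{(s^9-84s^6-378s^5-1512s^4-5208s^3-7236s^2-8127s-784)\,u}{432\,s(s+1)^2(s^2+s+7)^2}.$$ Then, using $t$ as a local coordinate on $\Pi$ away from its critical points, $y(t)$ is a solution of $\mathrm{P}_{\mathrm{VI}}$ with parameters $(\theta_1,\theta_2,\theta_3,\theta_4)=(2/7,2/7,2/7,1/3)$; as a cover of the $t$-line, $t:\Pi\to\mathbb{P}^1$ has degree $18$.
   Context: $\mathrm{P}_{\mathrm{VI}}$ is the equation $$\frac{d^2y}{dt^2}=\frac12\Big(\frac1y+\frac1{y-1}+\frac1{y-t}\Big)\Big(\frac{dy}{dt}\Big)^2-\Big(\frac1t+\frac1{t-1}+\frac1{y-t}\Big)\frac{dy}{dt}+\frac{y(y-1)(y-t)}{t^2(t-1)^2}\Big(\alpha+\beta\frac{t}{y^2}+\gamma\frac{t-1}{(y-1)^2}+\delta\frac{t(t-1)}{(y-t)^2}\Big),$$ with $\alpha=(\theta_4-1)^2/2$, $\beta=-\theta_1^2/2$, $\gamma=\theta_3^2/2$, $\delta=(1-\theta_2^2)/2$. When $y,t$ are given as rational functions of a parameter on a curve, derivatives with respect to $t$ are computed via the chain rule. *)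

theory Defs
  imports "HOL-Analysis.Analysis"
begin

definition on_Pi :: "complex \<Rightarrow> complex \<Rightarrow> bool" where
  "on_Pi s u \<longleftrightarrow> u^2 = s * (s^2 + s + 7)"

definition y_num :: "complex \<Rightarrow> complex" where
  "y_num s = 3* s^8 - 2* s^7 - 4* s^6 - 204* s^5 - 536* s^4 - 1738* s^3 - 5064* s^2 - 4808* s - 3199"

definition y_den :: "complex \<Rightarrow> complex" where
  "y_den s = 4 * (s^6 + 196* s^3 + 189* s^2 + 756* s + 154) * (s^2 + s + 7) * (s + 1)"

definition y_fun :: "complex \<Rightarrow> complex \<Rightarrow> complex" where
  "y_fun s u = 1/2 - y_num s * u / y_den s"

definition t_num :: "complex \<Rightarrow> complex" where
  "t_num s = s^9 - 84* s^6 - 378* s^5 - 1512* s^4 - 5208* s^3 - 7236* s^2 - 8127* s - 784"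

definition t_den :: "complex \<Rightarrow> complex" where
  "t_den s = 432 * s * (s + 1)^2 * (s^2 + s + 7)^2"

definition t_fun :: "complex \<Rightarrow> complex \<Rightarrow> complex" where
  "t_fun s u = 1/2 - t_num s * u / t_den s"

definition PVI_rhs :: "complex \<Rightarrow> complex \<Rightarrow> complex \<Rightarrow> complex \<Rightarrow> complex \<Rightarrow> complex \<Rightarrow> complex \<Rightarrow> complex" where
  "PVI_rhs \<theta>1 \<theta>2 \<theta>3 \<theta>4 t y y' =
     (let \<alpha> = (\<theta>4 - 1)^2 / 2; \<beta> = - (\<theta>1^2) / 2; \<gamma> = \<theta>3^2 / 2; \<delta> = (1 - \<theta>2^2) / 2 in
      1/2 * (1/y + 1/(y - 1) + 1/(y - t)) * y'^2
      - (1/t + 1/(t - 1) + 1/(y - t)) * y'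
      + y * (y - 1) * (y - t) / (t^2 * (t - 1)^2)
        * (\<alpha> + \<beta> * t / y^2 + \<gamma> * (t - 1) / (y - 1)^2 + \<delta> * t * (t - 1) / (y - t)^2))"

definition solves_PVI_on :: "complex \<Rightarrow> complex \<Rightarrow> complex \<Rightarrow> complex \<Rightarrow> (complex \<Rightarrow> complex) \<Rightarrow> complex set \<Rightarrow> bool" where
  "solves_PVI_on \<theta>1 \<theta>2 \<theta>3 \<theta>4 Y T \<longleftrightarrow>
     (\<forall>\<tau>\<in>T. \<tau> \<noteq> 0 \<and> \<tau> \<noteq> 1 \<and> Y \<tau> \<noteq> 0 \<and> Y \<tau> \<noteq> 1 \<and> Y \<tau> \<noteq> \<tau> \<longrightarrow>
        deriv (deriv Y) \<tau> = PVI_rhs \<theta>1 \<theta>2 \<theta>3 \<theta>4 \<tau> (Y \<tau>) (deriv Y \<tau>))"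

definition t_fiber :: "complex \<Rightarrow> (complex \<times> complex) set" where
  "t_fiber c = {(s, u). on_Pi s u \<and> t_den s \<noteq> 0 \<and> t_fun s u = c}"

end

theory Submission
  imports Defs "HOL-Computational_Algebra.Fundamental_Theorem_Algebra"
begin

text \<open>
  The involution \<open>u \<mapsto> -u\<close> of \<open>\<Pi>\<close> maps \<open>(t, y)\<close> to \<open>(1 - t, 1 - y)\<close>, a symmetry of
  \<open>P\<^sub>V\<^sub>I\<close> when \<open>\<theta>\<^sub>1 = \<theta>\<^sub>3\<close>. Write \<open>t = 1/2 + b(s) u\<close> and \<open>y = 1/2 + a(s) u\<close> with
  \<open>u\<^sup>2 = f(s) = s (s\<^sup>2 + s + 7)\<close>. Then \<open>dy/dt = (2a'f + af')/(2b'f + bf')\<close> is a rational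
  function of \<open>s\<close> alone, so \<open>d\<^sup>2y/dt\<^sup>2\<close> is \<open>u\<close> times a rational function of \<open>s\<close>, and
  so is the right-hand side of \<open>P\<^sub>V\<^sub>I\<close>. The equation thus reduces to one polynomial
  identity in \<open>s\<close>.

  For \<open>c \<noteq> 1/2\<close> the points of \<open>\<Pi>\<close> with \<open>t = c\<close> project bijectively onto the roots of
  \<open>t_num\<^sup>2 - (1/2 - c)\<^sup>2 t_den\<^sup>2 / f\<close>, a polynomial of degree 18. It is squarefree for all
  but finitely many \<open>c\<close>, because \<open>t_num\<^sup>2\<close> and \<open>t_den\<^sup>2 / f\<close> have no common root and a
  nonzero Wronskian.
\<close>

section \<open>Derivatives along a double cover\<close>

lemma has_field_derivative_unique_on_open:
  assumes "(f has_field_derivative D) (at x)" "(g has_field_derivative E) (at x)"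
    and "open T" "x \<in> T" "\<And>y. y \<in> T \<Longrightarrow> f y = g y"
  shows "D = E"
proof -
  have "(g has_field_derivative D) (at x)"
    using has_field_derivative_transform_within_open[OF assms(1,3,4)] assms(5) by simp
  then show ?thesis using assms(2) by (rule DERIV_unique)
qed

text \<open>On \<open>u\<^sup>2 = f(s)\<close> with coordinate \<open>t = c + b(s) u\<close>, the chain rule gives
  \<open>2u dt/ds = 2b'f + bf'\<close> and \<open>2u d(a u)/ds = 2a'f + af'\<close>.\<close>

lemma odd_function_derivative_along_curve:
  fixes S U f b a :: "complex \<Rightarrow> complex"
  assumes T: "open T" "\<tau> \<in> T" and hol: "S holomorphic_on T" "U holomorphic_on T"
    and curve: "\<forall>x\<in>T. U x ^ 2 = f (S x)"
    and coord: "\<forall>x\<in>T. c + b (S x) * U x = x"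
    and df: "(f has_field_derivative f') (at (S \<tau>))"
    and db: "(b has_field_derivative b') (at (S \<tau>))"
    and da: "(a has_field_derivative a') (at (S \<tau>))"
    and U0: "U \<tau> \<noteq> 0"
  shows "deriv S \<tau> * (2 * b' * f (S \<tau>) + b (S \<tau>) * f') = 2 * U \<tau>"
    and "((\<lambda>x. a (S x) * U x) has_field_derivative
           (2 * a' * f (S \<tau>) + a (S \<tau>) * f') / (2 * b' * f (S \<tau>) + b (S \<tau>) * f')) (at \<tau>)"
proof -
  define s u s' u' where "s = S \<tau>" and "u = U \<tau>" and "s' = deriv S \<tau>" and "u' = deriv U \<tau>"
  have dS: "(S has_field_derivative s') (at \<tau>)"
    unfolding s'_def by (rule holomorphic_derivI[OF hol(1) T(1,2)])
  have dU: "(U has_field_derivative u') (at \<tau>)"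
    unfolding u'_def by (rule holomorphic_derivI[OF hol(2) T(1,2)])
  have u2: "u ^ 2 = f s" using curve T(2) unfolding s_def u_def by simp
  have "2 * u * u' = f' * s'"
  proof (rule has_field_derivative_unique_on_open[OF _ _ T])
    show "((\<lambda>x. U x ^ 2) has_field_derivative 2 * u * u') (at \<tau>)"
      unfolding u_def by (auto intro!: derivative_eq_intros dU)
    show "((\<lambda>x. f (S x)) has_field_derivative f' * s') (at \<tau>)"
      using DERIV_chain2[OF df dS] unfolding s_def .
  qed (use curve in auto)
  moreover have "b' * s' * u + b s * u' = 1"
  proof (rule has_field_derivative_unique_on_open[OF _ _ T])
    show "((\<lambda>x. c + b (S x) * U x) has_field_derivative b' * s' * u + b s * u') (at \<tau>)"
      using DERIV_chain2[OF db dS] unfolding s_def u_def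
      by (auto intro!: derivative_eq_intros dU)
  qed (use coord in \<open>auto intro: DERIV_ident\<close>)
  ultimately have chain: "s' * (2 * b' * f s + b s * f') = 2 * u"
    by (simp add: u2[symmetric] algebra_simps) algebra
  then show "deriv S \<tau> * (2 * b' * f (S \<tau>) + b (S \<tau>) * f') = 2 * U \<tau>"
    unfolding s_def u_def s'_def .
  have D0: "2 * b' * f s + b s * f' \<noteq> 0" using chain U0 unfolding u_def by auto
  have "((\<lambda>x. a (S x) * U x) has_field_derivative a' * s' * u + a s * u') (at \<tau>)"
    using DERIV_chain2[OF da dS] unfolding s_def u_def by (auto intro!: derivative_eq_intros dU)
  moreover have "a' * s' * u + a s * u' = (2 * a' * f s + a s * f') / (2 * b' * f s + b s * f')"
  proof -
    have "2 * u * ((a' * s' * u + a s * u') * (2 * b' * f s + b s * f'))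
        = 2 * u * (2 * a' * f s + a s * f')"
      using chain \<open>2 * u * u' = f' * s'\<close> u2 by algebra
    then have "(a' * s' * u + a s * u') * (2 * b' * f s + b s * f') = 2 * a' * f s + a s * f'"
      using U0 unfolding u_def by simp
    then show ?thesis using D0 by (simp add: eq_divide_eq)
  qed
  ultimately show "((\<lambda>x. a (S x) * U x) has_field_derivative
           (2 * a' * f (S \<tau>) + a (S \<tau>) * f') / (2 * b' * f (S \<tau>) + b (S \<tau>) * f')) (at \<tau>)"
    unfolding s_def by simp
qed

section \<open>The odd part of the Painleve VI right-hand side\<close>

text \<open>With \<open>y = 1/2 + a u\<close>, \<open>t = 1/2 + b u\<close> and \<open>u\<^sup>2 = f\<close> one has \<open>A = y (y - 1)\<close>,
  \<open>B = t (t - 1)\<close> and \<open>W u = y - t\<close>.\<close>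

definition PVI_odd_part ::
    "complex \<Rightarrow> complex \<Rightarrow> complex \<Rightarrow> complex \<Rightarrow> complex \<Rightarrow> complex \<Rightarrow> complex \<Rightarrow> complex"
  where
  "PVI_odd_part \<theta> \<theta>2 \<theta>4 a b f \<phi> =
     (let A = a^2 * f - 1/4; B = b^2 * f - 1/4; W = a - b in
      (a/A + 1/(2*W*f)) * \<phi>^2 - (2*b/B + 1/(W*f)) * \<phi>
      + W/B^2 * ((\<theta>4 - 1)^2/2 * A + (1 - \<theta>2^2)/2 * A*B/(W^2*f)
                  - \<theta>^2/2 * (1/4 + (a^2 - 2*a*b)*f)/A))"

lemma PVI_rhs_odd:
  fixes u a b f y t \<phi> \<theta> \<theta>2 \<theta>4 :: complex
  assumes f: "u^2 = f" and u0: "u \<noteq> 0"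
    and "y \<noteq> 0" "y \<noteq> 1" "t \<noteq> 0" "t \<noteq> 1" "y \<noteq> t"
    and y: "y = 1/2 + a*u" and t: "t = 1/2 + b*u"
  shows "PVI_rhs \<theta> \<theta>2 \<theta> \<theta>4 t y \<phi> = u * PVI_odd_part \<theta> \<theta>2 \<theta>4 a b f \<phi>"
proof -
  define A B W Z where "A = a^2 * f - 1/4" and "B = b^2 * f - 1/4" and "W = a - b"
    and "Z = 1/4 + (a^2 - 2*a*b) * f"
  have A: "A = y * (y - 1)" and B: "B = t * (t - 1)" and W: "W * u = y - t"
    and Z: "Z = y^2 - 2*t*y + t"
    unfolding A_def B_def W_def Z_def y t f[symmetric] by algebra+
  have nz: "y - 1 \<noteq> 0" "t - 1 \<noteq> 0" "y - t \<noteq> 0" using assms(4,6,7) by auto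
  have nz0: "A \<noteq> 0" "B \<noteq> 0" "W \<noteq> 0" "f \<noteq> 0"
    using A B W nz assms(3-6) u0 f[symmetric] by auto
  have ya: "2*a*u = 2*y - 1" and tb: "2*b*u = 2*t - 1" using y t by simp_all
  have e1: "1/y + 1/(y - 1) = 2*a*u/A"
    unfolding A ya using assms(3) nz by (simp add: field_simps)
  have e2: "1/(y - t) = u/(W*f)"
    unfolding W[symmetric] f[symmetric] using u0 by (simp add: power2_eq_square)
  have e3: "1/t + 1/(t - 1) = 2*b*u/B"
    unfolding B tb using assms(5) nz by (simp add: field_simps)
  have e4: "y * (y - 1) * (y - t) / (t^2 * (t - 1)^2) = A*W*u/B^2"
    unfolding A B W[symmetric] by (simp add: power_mult_distrib mult.assoc)
  have e5: "- (\<theta>^2/2) * t / y^2 + \<theta>^2/2 * (t - 1) / (y - 1)^2 = - (\<theta>^2/2) * Z / A^2"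
    unfolding A Z using assms(3-6) nz by (simp add: field_simps) algebra
  have e6: "t * (t - 1) / (y - t)^2 = B/(W^2*f)"
    unfolding B W[symmetric] f[symmetric] using u0 by (simp add: power_mult_distrib)
  have "PVI_rhs \<theta> \<theta>2 \<theta> \<theta>4 t y \<phi> = 1/2 * (2*a*u/A + u/(W*f)) * \<phi>^2 - (2*b*u/B + u/(W*f)) * \<phi>
      + A*W*u/B^2 * ((\<theta>4 - 1)^2/2 + - (\<theta>^2/2) * Z / A^2 + (1 - \<theta>2^2)/2 * (B/(W^2*f)))"
    unfolding PVI_rhs_def Let_def e1[symmetric] e2[symmetric] e3[symmetric] e4[symmetric]
      e5[symmetric] e6[symmetric]
    by (simp add: algebra_simps)
  also have "\<dots> = u * PVI_odd_part \<theta> \<theta>2 \<theta>4 a b f \<phi>"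
    unfolding PVI_odd_part_def Let_def A_def[symmetric] B_def[symmetric] W_def[symmetric]
      Z_def[symmetric]
    using nz0 by (simp add: field_simps power2_eq_square)
  finally show ?thesis .
qed

section \<open>Fibres of an odd function\<close>

lemma card_roots_rsquarefree:
  fixes p :: "complex poly"
  assumes "rsquarefree p"
  shows "card {z. poly p z = 0} = degree p"
proof -
  have "p \<noteq> 0" using assms by (simp add: rsquarefree_def)
  define R where "R = {z. poly p z = 0}"
  have "smult (lead_coeff p) (\<Prod>z\<in>R. [:-z, 1:]) = p"
    unfolding R_def by (rule complex_poly_decompose_rsquarefree[OF assms])
  then have "degree p = degree (\<Prod>z\<in>R. [:-z, 1:])"
    using \<open>p \<noteq> 0\<close> by (metis degree_smult_eq leading_coeff_0_iff)
  also have "\<dots> = card R" by (subst degree_prod_sum_eq) simp_all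
  finally show ?thesis unfolding R_def by simp
qed

lemma finite_non_rsquarefree_pencil:
  fixes A B :: "complex poly"
  assumes no_common_root: "\<And>z. poly B z = 0 \<Longrightarrow> poly A z \<noteq> 0"
    and wronskian: "pderiv A * B - A * pderiv B \<noteq> 0"
  shows "finite {k. \<not> rsquarefree (A - smult k B)}"
proof (rule finite_subset)
  let ?W = "pderiv A * B - A * pderiv B"
  show "finite ((\<lambda>z. poly A z / poly B z) ` {z. poly ?W z = 0})"
    using poly_roots_finite[OF wronskian] by simp
  show "{k. \<not> rsquarefree (A - smult k B)} \<subseteq> (\<lambda>z. poly A z / poly B z) ` {z. poly ?W z = 0}"
  proof
    fix k assume "k \<in> {k. \<not> rsquarefree (A - smult k B)}"
    then obtain z where "poly A z = k * poly B z" "poly (pderiv A) z = k * poly (pderiv B) z"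
      by (auto simp: rsquarefree_roots pderiv_diff pderiv_smult)
    moreover from this have "poly B z \<noteq> 0" using no_common_root by auto
    ultimately show "k \<in> (\<lambda>z. poly A z / poly B z) ` {z. poly ?W z = 0}"
      by (intro image_eqI[of _ _ z]) auto
  qed
qed

lemma finite_preimage_shifted_square:
  fixes K :: "complex set"
  assumes "finite K"
  shows "finite {c. (a - c)^2 \<in> K}"
proof -
  have "{c. (a - c)^2 \<in> K} = (\<Union>k\<in>K. {c. poly [:a^2 - k, -2*a, 1:] c = 0})"
    by (auto simp: power2_eq_square algebra_simps)
  moreover have "finite {c. poly [:a^2 - k, -2*a, 1:] c = 0}" for k
    by (rule poly_roots_finite) simp
  ultimately show ?thesis using assms by simp
qed

lemma bij_betw_fst_odd_fiber:
  fixes N D B f :: "complex \<Rightarrow> complex"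
  assumes D_sq: "\<And>s. D s ^ 2 = B s * f s"
    and f_zero: "\<And>s. f s = 0 \<Longrightarrow> B s = 0"
    and no_common_root: "\<And>s. B s = 0 \<Longrightarrow> N s \<noteq> 0"
    and "k \<noteq> 0"
  shows "bij_betw fst {(s, u). u^2 = f s \<and> D s \<noteq> 0 \<and> N s * u = k * D s} {s. N s ^ 2 = k^2 * B s}"
proof (rule bij_betwI')
  fix p q assume "p \<in> {(s, u). u^2 = f s \<and> D s \<noteq> 0 \<and> N s * u = k * D s}"
    and "q \<in> {(s, u). u^2 = f s \<and> D s \<noteq> 0 \<and> N s * u = k * D s}"
  moreover have "u = u'" if "N s * u = k * D s" "N s * u' = k * D s" "D s \<noteq> 0" for s u u'
    using that \<open>k \<noteq> 0\<close> by (metis mult_cancel_left mult_eq_0_iff)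
  ultimately show "(fst p = fst q) = (p = q)" by (cases p, cases q) auto
next
  fix p assume "p \<in> {(s, u). u^2 = f s \<and> D s \<noteq> 0 \<and> N s * u = k * D s}"
  then obtain s u where p: "p = (s, u)" "u^2 = f s" "D s \<noteq> 0" "N s * u = k * D s" by blast
  have "f s \<noteq> 0" using D_sq[of s] p(3) by auto
  have "N s ^ 2 * f s = k^2 * B s * f s"
    using arg_cong[OF p(4), of "\<lambda>x. x^2"] p(2) D_sq[of s] by (simp add: power_mult_distrib)
  then show "fst p \<in> {s. N s ^ 2 = k^2 * B s}" using p(1) \<open>f s \<noteq> 0\<close> by simp
next
  fix s assume "s \<in> {s. N s ^ 2 = k^2 * B s}"
  then have s: "N s ^ 2 = k^2 * B s" by simp
  have "B s \<noteq> 0" using s no_common_root \<open>k \<noteq> 0\<close> by force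
  then have "N s \<noteq> 0" "f s \<noteq> 0" using s \<open>k \<noteq> 0\<close> f_zero by auto
  then have "D s \<noteq> 0" using D_sq[of s] \<open>B s \<noteq> 0\<close> by auto
  define u where "u = k * D s / N s"
  have "u^2 = f s"
    unfolding u_def using D_sq[of s] s \<open>N s \<noteq> 0\<close> \<open>B s \<noteq> 0\<close> \<open>k \<noteq> 0\<close>
    by (simp add: power_divide power_mult_distrib)
  moreover have "N s * u = k * D s" unfolding u_def using \<open>N s \<noteq> 0\<close> by simp
  ultimately show "\<exists>p\<in>{(s, u). u^2 = f s \<and> D s \<noteq> 0 \<and> N s * u = k * D s}. s = fst p"
    using \<open>D s \<noteq> 0\<close> by force
qed

section \<open>The rational functions \<open>y\<close> and \<open>t\<close> on \<open>\<Pi>\<close>\<close>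

definition y_num' :: "complex \<Rightarrow> complex" where
  "y_num' s = 24 * s^7 - 14 * s^6 - 24 * s^5 - 1020 * s^4 - 2144 * s^3 - 5214 * s^2 - 10128 * s
     - 4808"

definition y_den' :: "complex \<Rightarrow> complex" where
  "y_den' s = 36 * s^8 + 64 * s^7 + 224 * s^6 + 4872 * s^5 + 11620 * s^4 + 43232 * s^3 + 54600 * s^2
     + 61432 * s + 26096"

definition t_num' :: "complex \<Rightarrow> complex" where
  "t_num' s = 9 * s^8 - 504 * s^5 - 1890 * s^4 - 6048 * s^3 - 15624 * s^2 - 14472 * s - 8127"

definition t_den' :: "complex \<Rightarrow> complex" where
  "t_den' s = 3024 * s^6 + 10368 * s^5 + 43200 * s^4 + 79488 * s^3 + 119232 * s^2 + 96768 * s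
     + 21168"

lemma y_num_has_derivative: "(y_num has_field_derivative y_num' s) (at s)"
  unfolding y_num_def[abs_def] y_num'_def
  by (rule derivative_eq_intros refl)+ (simp; algebra)

lemma y_den_has_derivative: "(y_den has_field_derivative y_den' s) (at s)"
  unfolding y_den_def[abs_def] y_den'_def
  by (rule derivative_eq_intros refl)+ (simp; algebra)

lemma t_num_has_derivative: "(t_num has_field_derivative t_num' s) (at s)"
  unfolding t_num_def[abs_def] t_num'_def
  by (rule derivative_eq_intros refl)+ (simp; algebra)

lemma t_den_has_derivative: "(t_den has_field_derivative t_den' s) (at s)"
  unfolding t_den_def[abs_def] t_den'_def
  by (rule derivative_eq_intros refl)+ (simp; algebra)

definition y_odd_coeff :: "complex \<Rightarrow> complex" where
  "y_odd_coeff s = - y_num s / y_den s"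

definition t_odd_coeff :: "complex \<Rightarrow> complex" where
  "t_odd_coeff s = - t_num s / t_den s"

definition y_odd_coeff' :: "complex \<Rightarrow> complex" where
  "y_odd_coeff' s = (- y_num' s * y_den s + y_num s * y_den' s) / y_den s ^ 2"

definition t_odd_coeff' :: "complex \<Rightarrow> complex" where
  "t_odd_coeff' s = (- t_num' s * t_den s + t_num s * t_den' s) / t_den s ^ 2"

lemma y_fun_eq: "y_fun s u = 1/2 + y_odd_coeff s * u"
  unfolding y_fun_def y_odd_coeff_def by simp

lemma t_fun_eq: "t_fun s u = 1/2 + t_odd_coeff s * u"
  unfolding t_fun_def t_odd_coeff_def by simp

lemma y_odd_coeff_has_derivative:
  assumes "y_den s \<noteq> 0"
  shows "(y_odd_coeff has_field_derivative y_odd_coeff' s) (at s)"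
  using DERIV_divide[OF DERIV_minus[OF y_num_has_derivative] y_den_has_derivative assms]
  unfolding y_odd_coeff_def[abs_def] y_odd_coeff'_def by (simp add: power2_eq_square)

lemma t_odd_coeff_has_derivative:
  assumes "t_den s \<noteq> 0"
  shows "(t_odd_coeff has_field_derivative t_odd_coeff' s) (at s)"
  using DERIV_divide[OF DERIV_minus[OF t_num_has_derivative] t_den_has_derivative assms]
  unfolding t_odd_coeff_def[abs_def] t_odd_coeff'_def by (simp add: power2_eq_square)

text \<open>\<open>2c'f + cf'\<close> is \<open>2u\<close> times the \<open>s\<close>-derivative of \<open>c u\<close> along \<open>u\<^sup>2 = f\<close>; here it
  is computed for \<open>c = -N/D\<close>.\<close>

lemma twisted_derivative_of_quotient:
  fixes N D N' D' f f' :: complex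
  assumes "D \<noteq> 0"
  shows "2 * ((- N' * D + N * D') / D^2) * f + - N / D * f'
    = - (2 * f * (N' * D - N * D') + N * D * f') / D^2"
  using assms by (simp add: field_simps power2_eq_square)

text \<open>\<open>2u dt/ds\<close> along \<open>\<Pi>\<close>.\<close>

definition t_slope :: "complex \<Rightarrow> complex" where
  "t_slope s = - 3024 * s * (s + 1) * (s^2 + s + 7)^2 * (s - 1)^6 * (s^2 + 4 * s + 7)^2
     * (s^2 + s + 16) / t_den s ^ 2"

lemma t_odd_coeff_twisted_derivative:
  assumes "t_den s \<noteq> 0"
  shows "2 * t_odd_coeff' s * (s * (s^2 + s + 7)) + t_odd_coeff s * (3 * s^2 + 2 * s + 7)
    = t_slope s"
proof -
  have "2 * (s * (s^2 + s + 7)) * (t_num' s * t_den s - t_num s * t_den' s)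
      + t_num s * t_den s * (3 * s^2 + 2 * s + 7)
      = 3024 * s * (s + 1) * (s^2 + s + 7)^2 * (s - 1)^6 * (s^2 + 4 * s + 7)^2 * (s^2 + s + 16)"
    unfolding t_num_def t_den_def t_num'_def t_den'_def by algebra
  then show ?thesis
    unfolding t_odd_coeff_def t_odd_coeff'_def twisted_derivative_of_quotient[OF assms] t_slope_def
    by simp
qed

definition y_den_sextic :: "complex \<Rightarrow> complex" where
  "y_den_sextic s = s^6 + 196 * s^3 + 189 * s^2 + 756 * s + 154"

lemma y_den_factored: "y_den s = 4 * (s + 1) * (s^2 + s + 7) * y_den_sextic s"
  unfolding y_den_def y_den_sextic_def by algebra

definition dy_factor :: "complex \<Rightarrow> complex" where
  "dy_factor s = 3 * s^10 + 20 * s^9 + 114 * s^8 + 5424 * s^7 + 24066 * s^6 + 136248 * s^5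
     + 401856 * s^4 + 953904 * s^3 + 1532643 * s^2 + 1491924 * s + 492646"

lemma y_odd_coeff_twisted_derivative:
  assumes "y_den s \<noteq> 0"
  shows "2 * y_odd_coeff' s * (s * (s^2 + s + 7)) + y_odd_coeff s * (3 * s^2 + 2 * s + 7)
    = - (4 * (s^2 + s + 7) * (s - 1)^5 * (s^2 + 4 * s + 7) * dy_factor s) / y_den s ^ 2"
proof -
  have "2 * (s * (s^2 + s + 7)) * (y_num' s * y_den s - y_num s * y_den' s)
      + y_num s * y_den s * (3 * s^2 + 2 * s + 7)
      = 4 * (s^2 + s + 7) * (s - 1)^5 * (s^2 + 4 * s + 7) * dy_factor s"
    unfolding y_num_def y_den_def y_num'_def y_den'_def dy_factor_def by algebra
  then show ?thesis
    unfolding y_odd_coeff_def y_odd_coeff'_def twisted_derivative_of_quotient[OF assms] by simp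
qed

definition dy_dt :: "complex \<Rightarrow> complex" where
  "dy_dt s = 108/7 * s * (s + 1) * (s^2 + s + 7) * dy_factor s
     / ((s - 1) * (s^2 + 4 * s + 7) * (s^2 + s + 16) * y_den_sextic s ^ 2)"

lemma dy_dt_eq_twisted_derivatives:
  assumes "t_den s \<noteq> 0" "y_den s \<noteq> 0" "(s - 1) * (s^2 + 4 * s + 7) * (s^2 + s + 16) \<noteq> 0"
  shows "(2 * y_odd_coeff' s * (s * (s^2 + s + 7)) + y_odd_coeff s * (3 * s^2 + 2 * s + 7))
    / t_slope s = dy_dt s"
proof -
  have quotient: "- (4 * q * m^5 * c * r) / (4 * s1 * q * e)^2
      / (- 3024 * s * s1 * q^2 * m^6 * c^2 * d / (432 * s * s1^2 * q^2)^2)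
    = 108/7 * s * s1 * q * r / (m * c * d * e^2)"
    if "s \<noteq> 0" "s1 \<noteq> 0" "q \<noteq> 0" "m \<noteq> 0" "c \<noteq> 0" "d \<noteq> 0" "e \<noteq> 0"
    for s s1 q m c d e r :: complex
    using that by (simp add: field_simps eval_nat_numeral)
  have "s \<noteq> 0" "s + 1 \<noteq> 0" "s^2 + s + 7 \<noteq> 0" using assms(1) unfolding t_den_def by auto
  moreover have "y_den_sextic s \<noteq> 0" using assms(2) unfolding y_den_factored by auto
  ultimately show ?thesis
    unfolding y_odd_coeff_twisted_derivative[OF assms(2)] t_slope_def dy_dt_def y_den_factored
      t_den_def
    using assms(3) by (intro quotient) auto
qed

definition d2y_factor :: "complex \<Rightarrow> complex" where
  "d2y_factor s = 9 * s^24 + 128 * s^23 + 1268 * s^22 + 37226 * s^21 + 358756 * s^20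
     + 3011524 * s^19 + 17916040 * s^18 + 89664936 * s^17 + 366884718 * s^16
     + 1317669504 * s^15 + 4321463384 * s^14 + 14201086508 * s^13 + 45414528068 * s^12
     + 143858158696 * s^11 + 399392042896 * s^10 + 972927243400 * s^9 + 1949926001457 * s^8
     + 3255705229728 * s^7 + 4421330994612 * s^6 + 4956773703098 * s^5 + 4626615906416 * s^4
     + 3182996151860 * s^3 + 1151031856744 * s^2 + 204219148672 * s + 59480107456"

definition dy_dt' :: "complex \<Rightarrow> complex" where
  "dy_dt' s = - 108/7 * d2y_factor s
     / ((s - 1)^2 * (s^2 + 4 * s + 7)^2 * (s^2 + s + 16)^2 * y_den_sextic s ^ 3)"

lemma dy_dt_has_derivative:
  assumes "(s - 1) * (s^2 + 4 * s + 7) * (s^2 + s + 16) * y_den_sextic s \<noteq> 0"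
  shows "(dy_dt has_field_derivative dy_dt' s) (at s)"
proof -
  define G H where "G = (\<lambda>s. s * (s + 1) * (s^2 + s + 7) * dy_factor s)"
    and "H = (\<lambda>s. (s - 1) * (s^2 + 4 * s + 7) * (s^2 + s + 16) * y_den_sextic s ^ 2)"
  define P Q r e where "P = s * (s + 1) * (s^2 + s + 7)"
    and "Q = (s - 1) * (s^2 + 4 * s + 7) * (s^2 + s + 16)"
    and "r = dy_factor s" and "e = y_den_sextic s"
  define P' Q' r' e' where "P' = 4 * s^3 + 6 * s^2 + 16 * s + 7"
    and "Q' = 5 * s^4 + 16 * s^3 + 66 * s^2 + 88 * s + 41"
    and "r' = 30 * s^9 + 180 * s^8 + 912 * s^7 + 37968 * s^6 + 144396 * s^5 + 681240 * s^4
      + 1607424 * s^3 + 2861712 * s^2 + 3065286 * s + 1491924"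
    and "e' = 6 * s^5 + 588 * s^2 + 378 * s + 756"
  have dG: "(G has_field_derivative P' * r + P * r') (at s)"
    unfolding G_def P'_def P_def r_def r'_def dy_factor_def
    by (rule derivative_eq_intros refl)+ (simp; algebra)
  have dH: "(H has_field_derivative Q' * e^2 + Q * (2 * e * e')) (at s)"
    unfolding H_def Q'_def Q_def e_def e'_def y_den_sextic_def
    by (rule derivative_eq_intros refl)+ (simp; algebra)
  have H0: "H s \<noteq> 0" using assms unfolding H_def by simp
  have dy_dt_eq: "dy_dt = (\<lambda>s. 108/7 * (G s / H s))"
    unfolding dy_dt_def G_def H_def by (simp add: fun_eq_iff mult.assoc)
  have deriv: "(dy_dt has_field_derivative
      108/7 * (((P' * r + P * r') * H s - G s * (Q' * e^2 + Q * (2 * e * e'))) / (H s * H s)))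
      (at s)"
    unfolding dy_dt_eq by (rule DERIV_cmult[OF DERIV_divide[OF dG dH H0]])
  have numerator:
    "(P' * r + P * r') * H s - G s * (Q' * e^2 + Q * (2 * e * e')) = - e * d2y_factor s"
  proof -
    have "(P' * r + P * r') * Q * e - P * r * (Q' * e + 2 * Q * e') = - d2y_factor s"
      unfolding P_def Q_def r_def e_def P'_def Q'_def r'_def e'_def dy_factor_def y_den_sextic_def
        d2y_factor_def by algebra
    moreover have "G s = P * r" "H s = Q * e^2"
      unfolding G_def H_def P_def Q_def r_def e_def by simp_all
    ultimately show ?thesis by algebra
  qed
  have "H s = Q * e^2" "e \<noteq> 0" using H0 unfolding H_def Q_def e_def by simp_all
  moreover have "dy_dt' s = - 108/7 * d2y_factor s / (Q^2 * e^3)"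
    unfolding dy_dt'_def Q_def e_def by (simp add: power_mult_distrib)
  ultimately have "108/7 * (- e * d2y_factor s / (H s * H s)) = dy_dt' s"
    by (simp add: power2_eq_square power3_eq_cube)
  then show ?thesis using deriv unfolding numerator by simp
qed

definition yy1_factor :: "complex \<Rightarrow> complex" where
  "yy1_factor s = 9 * s^5 - 43 * s^4 - 38 * s^3 - 534 * s^2 - 1139 * s - 847"

definition y_t_factor :: "complex \<Rightarrow> complex" where
  "y_t_factor s = s^3 - 3 * s^2 - 6 * s - 154"

definition y_2t_factor :: "complex \<Rightarrow> complex" where
  "y_2t_factor s = s^15 - 50 * s^12 - 405 * s^11 - 1620 * s^10 - 10340 * s^9 - 43740 * s^8
     - 198045 * s^7 - 836200 * s^6 - 1843884 * s^5 - 3593970 * s^4 - 3625375 * s^3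
     - 4207140 * s^2 - 635040 * s - 120736"

lemma PVI_odd_part_eq_sum:
  fixes a b f \<phi> A B W Z :: complex
  assumes "A = a^2 * f - 1/4" "B = b^2 * f - 1/4" "W = a - b" "Z = 2 * a * b - a^2"
    and "A \<noteq> 0" "B \<noteq> 0" "W \<noteq> 0" "f \<noteq> 0"
  shows "PVI_odd_part (2/7) (2/7) (1/3) a b f \<phi>
    = a / A * \<phi>^2 + 1 / (2 * W * f) * \<phi>^2 + - (2 * b / B * \<phi>) + - (1 / (W * f) * \<phi>)
      + W / B^2 * (2/9 * A) + W / B^2 * (45/98 * A * B / (W^2 * f)) + W / B^2 * (2/49 * Z * f / A)
      + - (W / B^2 * (2/49 / (4 * A)))"
  using assms(5-8) unfolding PVI_odd_part_def Let_def assms(1-3)[symmetric] assms(4)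
  by (simp add: field_simps) algebra

text \<open>Stated over abstract field elements so that simplification treats every polynomial
  factor as an atom; \<open>PVI_certificate\<close> supplies the instance at a point \<open>s\<close>. Each of the
  eight summands of the odd part is a monomial times \<open>Q\<close>, and \<open>cert\<close> says that their
  coefficients add up to that of \<open>2\<phi>'/T\<close>.\<close>

lemma PVI_odd_part_by_certificate:
  fixes yn tn yd td a b f \<phi> \<phi>' T s s1 q m c d e s7 kA kW kZ kR kK :: complex
  assumes cert: "- 46656 * yn * s * m^6 * c^2 * d * s7^2 * kR^2 * kW
      + 2519424 * kA * s * s1 * q * m^6 * c^2 * d * s7^2 * kR^2
      + 653184 * tn * kA * m^6 * c^2 * d * e * s7 * kR * kW
      - 326592 * kA * m^7 * c^3 * d^2 * e^2 * s7^2 * kR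
      + 54867456 * kA^2 * s1 * q * m^12 * c^4 * d^2 * kW^2
      + 113374080 * kA^2 * s1 * q * m^7 * c^3 * d^2 * e^2 * s7
      + 2985984 * yn * s1^2 * q * e^2 * kW^2 * kZ
      - 644972544 * s1^5 * q^3 * e^4 * kW^2
      = 93312 * kK * kA * m^6 * c^2 * d * s7^2 * kW"
    and a: "a = - yn / yd" and b: "b = - tn / td" and f: "f = s * q"
    and yd: "yd = 4 * s1 * q * e" and td: "td = 432 * s * s1^2 * q^2"
    and cA: "4 * yn^2 * f - yd^2 = 4 * q * m^6 * c^2 * d * kA"
    and cB: "4 * tn^2 * f - td^2 = 4 * s * q * m^7 * c^3 * d^2 * s7"
    and cW: "tn * yd - yn * td = 4 * s1 * q * m^6 * c^2 * d * kW"
    and cZ: "2 * tn * yd - yn * td = 8 * s1 * q * kZ"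
    and \<phi>: "\<phi> = 108/7 * s * s1 * q * kR / (m * c * d * e^2)"
    and \<phi>': "\<phi>' = - 108/7 * kK / (m^2 * c^2 * d^2 * e^3)"
    and T: "T = - 3024 * s * s1 * q^2 * m^6 * c^2 * d / td^2"
    and nz0: "s \<noteq> 0" "s1 \<noteq> 0" "q \<noteq> 0" "m \<noteq> 0" "c \<noteq> 0" "d \<noteq> 0" "e \<noteq> 0"
    and A0: "a^2 * f - 1/4 \<noteq> 0" and B0: "b^2 * f - 1/4 \<noteq> 0" and W0: "a \<noteq> b"
  shows "PVI_odd_part (2/7) (2/7) (1/3) a b f \<phi> = 2 * \<phi>' / T"
proof -
  define A B W Z where "A = a^2 * f - 1/4" and "B = b^2 * f - 1/4" and "W = a - b"
    and "Z = 2 * a * b - a^2"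
  have yd0: "yd \<noteq> 0" and td0: "td \<noteq> 0" using yd td nz0 by auto
  have A_eq: "A = q * m^6 * c^2 * d * kA / yd^2"
  proof -
    have "A = (4 * yn^2 * f - yd^2) / (4 * yd^2)"
      unfolding A_def a using yd0 by (simp add: field_simps)
    then show ?thesis unfolding cA using yd0 by simp
  qed
  have B_eq: "B = s * q * m^7 * c^3 * d^2 * s7 / td^2"
  proof -
    have "B = (4 * tn^2 * f - td^2) / (4 * td^2)"
      unfolding B_def b using td0 by (simp add: field_simps)
    then show ?thesis unfolding cB using td0 by simp
  qed
  have W_eq: "W = 4 * s1 * q * m^6 * c^2 * d * kW / (td * yd)"
  proof -
    have "W = (tn * yd - yn * td) / (td * yd)"
      unfolding W_def a b using yd0 td0 by (simp add: field_simps)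
    then show ?thesis unfolding cW by simp
  qed
  have Z_eq: "Z = yn * (8 * s1 * q * kZ) / (td * yd^2)"
  proof -
    have "Z = yn * (2 * tn * yd - yn * td) / (td * yd^2)"
      unfolding Z_def a b using yd0 td0 by (simp add: field_simps power2_eq_square)
    then show ?thesis unfolding cZ by simp
  qed
  have nz: "s \<noteq> 0" "s1 \<noteq> 0" "q \<noteq> 0" "m \<noteq> 0" "c \<noteq> 0" "d \<noteq> 0" "e \<noteq> 0"
      "s7 \<noteq> 0" "kA \<noteq> 0" "kW \<noteq> 0"
    using nz0 A0 B0 W0 A_eq B_eq W_eq yd0 td0 unfolding A_def B_def W_def by auto
  have "A \<noteq> 0" "B \<noteq> 0" "W \<noteq> 0" "f \<noteq> 0"
    using A0 B0 W0 f nz unfolding A_def B_def W_def by auto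
  note split = PVI_odd_part_eq_sum[OF A_def B_def W_def Z_def this]
  define Q where "Q = s * s1^3 * q^2 / (49 * kA * m^14 * c^6 * d^4 * e^3 * s7^2 * kW)"
  have t1: "a / A * \<phi>^2
      = (- 46656 * yn * s * m^6 * c^2 * d * s7^2 * kR^2 * kW) * Q"
    unfolding Q_def A_eq B_eq W_eq Z_eq a b \<phi> yd td f by (simp add: field_simps nz; algebra)
  have t2: "1 / (2 * W * f) * \<phi>^2
      = (2519424 * kA * s * s1 * q * m^6 * c^2 * d * s7^2 * kR^2) * Q"
    unfolding Q_def A_eq B_eq W_eq Z_eq a b \<phi> yd td f by (simp add: field_simps nz; algebra)
  have t3: "- (2 * b / B * \<phi>)
      = (653184 * tn * kA * m^6 * c^2 * d * e * s7 * kR * kW) * Q"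
    unfolding Q_def A_eq B_eq W_eq Z_eq a b \<phi> yd td f by (simp add: field_simps nz; algebra)
  have t4: "- (1 / (W * f) * \<phi>)
      = (- 326592 * kA * m^7 * c^3 * d^2 * e^2 * s7^2 * kR) * Q"
    unfolding Q_def A_eq B_eq W_eq Z_eq a b \<phi> yd td f by (simp add: field_simps nz; algebra)
  have t5: "W / B^2 * (2/9 * A)
      = (54867456 * kA^2 * s1 * q * m^12 * c^4 * d^2 * kW^2) * Q"
    unfolding Q_def A_eq B_eq W_eq Z_eq a b \<phi> yd td f by (simp add: field_simps nz; algebra)
  have t6: "W / B^2 * (45/98 * A * B / (W^2 * f))
      = (113374080 * kA^2 * s1 * q * m^7 * c^3 * d^2 * e^2 * s7) * Q"
    unfolding Q_def A_eq B_eq W_eq Z_eq a b \<phi> yd td f by (simp add: field_simps nz; algebra)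
  have t7: "W / B^2 * (2/49 * Z * f / A)
      = (2985984 * yn * s1^2 * q * e^2 * kW^2 * kZ) * Q"
    unfolding Q_def A_eq B_eq W_eq Z_eq a b \<phi> yd td f by (simp add: field_simps nz; algebra)
  have t8: "- (W / B^2 * (2/49 / (4 * A)))
      = (- 644972544 * s1^5 * q^3 * e^4 * kW^2) * Q"
    unfolding Q_def A_eq B_eq W_eq Z_eq a b \<phi> yd td f by (simp add: field_simps nz; algebra)
  have \<psi>: "2 * \<phi>' / T = (93312 * kK * kA * m^6 * c^2 * d * s7^2 * kW) * Q"
    unfolding Q_def \<phi>' T td by (simp add: field_simps nz; algebra)
  show ?thesis
    unfolding split t1 t2 t3 t4 t5 t6 t7 t8 \<psi> using cert
    by (simp only: distrib_right[symmetric]) simp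
qed

text \<open>The \<open>P\<^sub>V\<^sub>I\<close> equation for \<open>y(t)\<close> with all denominators cleared.\<close>

lemma PVI_certificate:
  fixes s :: complex
  defines "yn \<equiv> y_num s" and "tn \<equiv> t_num s" and "s1 \<equiv> s + 1" and "q \<equiv> s^2 + s + 7"
    and "m \<equiv> s - 1" and "c \<equiv> s^2 + 4 * s + 7" and "d \<equiv> s^2 + s + 16" and "e \<equiv> y_den_sextic s"
    and "s7 \<equiv> s - 7" and "kA \<equiv> yy1_factor s" and "kW \<equiv> y_t_factor s" and "kZ \<equiv> y_2t_factor s"
    and "kR \<equiv> dy_factor s" and "kK \<equiv> d2y_factor s"
  shows "- 46656 * yn * s * m^6 * c^2 * d * s7^2 * kR^2 * kW
    + 2519424 * kA * s * s1 * q * m^6 * c^2 * d * s7^2 * kR^2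
    + 653184 * tn * kA * m^6 * c^2 * d * e * s7 * kR * kW
    - 326592 * kA * m^7 * c^3 * d^2 * e^2 * s7^2 * kR
    + 54867456 * kA^2 * s1 * q * m^12 * c^4 * d^2 * kW^2
    + 113374080 * kA^2 * s1 * q * m^7 * c^3 * d^2 * e^2 * s7
    + 2985984 * yn * s1^2 * q * e^2 * kW^2 * kZ
    - 644972544 * s1^5 * q^3 * e^4 * kW^2
    = 93312 * kK * kA * m^6 * c^2 * d * s7^2 * kW"
  unfolding assms y_num_def t_num_def yy1_factor_def y_t_factor_def y_2t_factor_def dy_factor_def
    d2y_factor_def y_den_sextic_def by algebra

lemma PVI_odd_part_dy_dt:
  assumes "t_den s \<noteq> 0" "y_den s \<noteq> 0" "(s - 1) * (s^2 + 4 * s + 7) * (s^2 + s + 16) \<noteq> 0"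
    and "y_odd_coeff s ^ 2 * (s * (s^2 + s + 7)) - 1/4 \<noteq> 0"
    and "t_odd_coeff s ^ 2 * (s * (s^2 + s + 7)) - 1/4 \<noteq> 0"
    and "y_odd_coeff s \<noteq> t_odd_coeff s"
  shows "PVI_odd_part (2/7) (2/7) (1/3) (y_odd_coeff s) (t_odd_coeff s) (s * (s^2 + s + 7))
    (dy_dt s) = 2 * dy_dt' s / t_slope s"
proof (rule PVI_odd_part_by_certificate[OF PVI_certificate])
  show "4 * y_num s ^ 2 * (s * (s^2 + s + 7)) - y_den s ^ 2
      = 4 * (s^2 + s + 7) * (s - 1)^6 * (s^2 + 4 * s + 7)^2 * (s^2 + s + 16) * yy1_factor s"
    unfolding y_num_def y_den_def yy1_factor_def by algebra
  show "4 * t_num s ^ 2 * (s * (s^2 + s + 7)) - t_den s ^ 2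
      = 4 * s * (s^2 + s + 7) * (s - 1)^7 * (s^2 + 4 * s + 7)^3 * (s^2 + s + 16)^2 * (s - 7)"
    unfolding t_num_def t_den_def by algebra
  show "t_num s * y_den s - y_num s * t_den s
      = 4 * (s + 1) * (s^2 + s + 7) * (s - 1)^6 * (s^2 + 4 * s + 7)^2 * (s^2 + s + 16)
        * y_t_factor s"
    unfolding t_num_def y_den_def y_num_def t_den_def y_t_factor_def by algebra
  show "2 * t_num s * y_den s - y_num s * t_den s = 8 * (s + 1) * (s^2 + s + 7) * y_2t_factor s"
    unfolding t_num_def y_den_def y_num_def t_den_def y_2t_factor_def by algebra
  show "s \<noteq> 0" "s + 1 \<noteq> 0" "s^2 + s + 7 \<noteq> 0" using assms(1) unfolding t_den_def by auto
  show "y_den_sextic s \<noteq> 0" using assms(2) unfolding y_den_factored by auto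
  show "s - 1 \<noteq> 0" "s^2 + 4 * s + 7 \<noteq> 0" "s^2 + s + 16 \<noteq> 0" using assms(3) by auto
qed (use assms(4-6) in \<open>simp_all add: y_odd_coeff_def t_odd_coeff_def y_den_factored t_den_def
  dy_dt_def dy_dt'_def t_slope_def\<close>)

section \<open>\<open>y(t)\<close> solves Painleve VI\<close>

definition t_chart :: "complex set \<Rightarrow> (complex \<Rightarrow> complex) \<Rightarrow> (complex \<Rightarrow> complex) \<Rightarrow> bool" where
  "t_chart T S U \<longleftrightarrow> open T \<and> S holomorphic_on T \<and> U holomorphic_on T \<and>
     (\<forall>\<tau>\<in>T. on_Pi (S \<tau>) (U \<tau>) \<and> y_den (S \<tau>) \<noteq> 0 \<and> t_den (S \<tau>) \<noteq> 0 \<and> t_fun (S \<tau>) (U \<tau>) = \<tau>)"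

text \<open>Since \<open>t\<close> is a coordinate, \<open>t_slope\<close> cannot vanish on a chart, which keeps \<open>s\<close> away
  from the critical points \<open>s = 1\<close>, \<open>s\<^sup>2 + 4s + 7 = 0\<close> and \<open>s\<^sup>2 + s + 16 = 0\<close>.\<close>

lemma t_chart_derivatives:
  assumes chart: "t_chart T S U" and "\<tau> \<in> T"
  shows "U \<tau> \<noteq> 0"
    and "(S \<tau> - 1) * (S \<tau>^2 + 4 * S \<tau> + 7) * (S \<tau>^2 + S \<tau> + 16) \<noteq> 0"
    and "deriv S \<tau> * t_slope (S \<tau>) = 2 * U \<tau>"
    and "((\<lambda>x. y_fun (S x) (U x)) has_field_derivative dy_dt (S \<tau>)) (at \<tau>)"
proof -
  have T: "open T" "\<tau> \<in> T" and hol: "S holomorphic_on T" "U holomorphic_on T"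
    using chart assms(2) unfolding t_chart_def by auto
  have curve: "\<forall>x\<in>T. U x ^ 2 = S x * (S x ^ 2 + S x + 7)"
    and coord: "\<forall>x\<in>T. 1/2 + t_odd_coeff (S x) * U x = x"
    using chart unfolding t_chart_def on_Pi_def t_fun_eq by auto
  have dens: "t_den (S \<tau>) \<noteq> 0" "y_den (S \<tau>) \<noteq> 0" using chart T(2) unfolding t_chart_def by auto
  have "S \<tau> * (S \<tau> ^ 2 + S \<tau> + 7) \<noteq> 0" using dens(1) unfolding t_den_def by auto
  then show U0: "U \<tau> \<noteq> 0" using curve T(2) by auto
  have df: "((\<lambda>s. s * (s^2 + s + 7)) has_field_derivative 3 * S \<tau> ^ 2 + 2 * S \<tau> + 7) (at (S \<tau>))"
    by (rule derivative_eq_intros refl)+ (simp add: algebra_simps power2_eq_square)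
  note along = odd_function_derivative_along_curve[where f = "\<lambda>s. s * (s^2 + s + 7)"
      and b = t_odd_coeff and a = y_odd_coeff, OF T hol curve coord df
      t_odd_coeff_has_derivative[OF dens(1)] y_odd_coeff_has_derivative[OF dens(2)] U0,
      unfolded t_odd_coeff_twisted_derivative[OF dens(1)]]
  show "deriv S \<tau> * t_slope (S \<tau>) = 2 * U \<tau>" by (rule along(1))
  then have "t_slope (S \<tau>) \<noteq> 0" using U0 by auto
  then show crit: "(S \<tau> - 1) * (S \<tau>^2 + 4 * S \<tau> + 7) * (S \<tau>^2 + S \<tau> + 16) \<noteq> 0"
    unfolding t_slope_def by auto
  have "((\<lambda>x. 1/2 + y_odd_coeff (S x) * U x) has_field_derivative 0 + dy_dt (S \<tau>)) (at \<tau>)"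
    using DERIV_add[OF DERIV_const along(2)]
    unfolding dy_dt_eq_twisted_derivatives[OF dens crit] .
  then show "((\<lambda>x. y_fun (S x) (U x)) has_field_derivative dy_dt (S \<tau>)) (at \<tau>)"
    unfolding y_fun_eq by simp
qed

lemma t_chart_second_derivative:
  assumes chart: "t_chart T S U" and "\<tau> \<in> T"
  shows "deriv (deriv (\<lambda>x. y_fun (S x) (U x))) \<tau> = U \<tau> * (2 * dy_dt' (S \<tau>) / t_slope (S \<tau>))"
proof -
  have T: "open T" and hol: "S holomorphic_on T" using chart unfolding t_chart_def by auto
  have dY: "deriv (\<lambda>x. y_fun (S x) (U x)) x = dy_dt (S x)" if "x \<in> T" for x
    using t_chart_derivatives(4)[OF chart that] by (rule DERIV_imp_deriv)
  have "y_den_sextic (S \<tau>) \<noteq> 0"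
    using chart assms(2) unfolding t_chart_def y_den_factored by auto
  then have "((\<lambda>x. dy_dt (S x)) has_field_derivative dy_dt' (S \<tau>) * deriv S \<tau>) (at \<tau>)"
    using t_chart_derivatives(2)[OF chart assms(2)]
    by (intro DERIV_chain2[OF dy_dt_has_derivative] holomorphic_derivI[OF hol T assms(2)]) simp
  then have "(deriv (\<lambda>x. y_fun (S x) (U x)) has_field_derivative dy_dt' (S \<tau>) * deriv S \<tau>) (at \<tau>)"
    using has_field_derivative_transform_within_open[OF _ T assms(2)] dY by simp
  then have "deriv (deriv (\<lambda>x. y_fun (S x) (U x))) \<tau> = dy_dt' (S \<tau>) * deriv S \<tau>"
    by (rule DERIV_imp_deriv)
  moreover have "t_slope (S \<tau>) \<noteq> 0" "deriv S \<tau> = 2 * U \<tau> / t_slope (S \<tau>)"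
    using t_chart_derivatives(1,3)[OF chart assms(2)] by (auto simp: eq_divide_eq)
  ultimately show ?thesis by simp
qed

lemma y_fun_solves_PVI:
  assumes chart: "t_chart T S U"
  shows "solves_PVI_on (2/7) (2/7) (2/7) (1/3) (\<lambda>\<tau>. y_fun (S \<tau>) (U \<tau>)) T"
  unfolding solves_PVI_on_def
proof (intro ballI impI)
  fix \<tau> assume "\<tau> \<in> T"
  define s u y where "s = S \<tau>" and "u = U \<tau>" and "y = y_fun s u"
  assume "\<tau> \<noteq> 0 \<and> \<tau> \<noteq> 1 \<and> y_fun (S \<tau>) (U \<tau>) \<noteq> 0 \<and> y_fun (S \<tau>) (U \<tau>) \<noteq> 1
    \<and> y_fun (S \<tau>) (U \<tau>) \<noteq> \<tau>"
  then have nondeg: "\<tau> \<noteq> 0" "\<tau> \<noteq> 1" "y \<noteq> 0" "y \<noteq> 1" "y \<noteq> \<tau>" unfolding y_def s_def u_def by auto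
  have u2: "u^2 = s * (s^2 + s + 7)" and dens: "t_den s \<noteq> 0" "y_den s \<noteq> 0"
    and \<tau>: "\<tau> = 1/2 + t_odd_coeff s * u"
    using chart \<open>\<tau> \<in> T\<close> unfolding t_chart_def on_Pi_def s_def u_def t_fun_eq by auto
  have y: "y = 1/2 + y_odd_coeff s * u" unfolding y_def y_fun_eq ..
  have u0: "u \<noteq> 0" using t_chart_derivatives(1)[OF chart \<open>\<tau> \<in> T\<close>] unfolding u_def .
  have "y_odd_coeff s ^ 2 * (s * (s^2 + s + 7)) - 1/4 = y * (y - 1)"
    "t_odd_coeff s ^ 2 * (s * (s^2 + s + 7)) - 1/4 = \<tau> * (\<tau> - 1)"
    "(y_odd_coeff s - t_odd_coeff s) * u = y - \<tau>"
    unfolding y \<tau> u2[symmetric] by algebra+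
  then have odd_part: "PVI_odd_part (2/7) (2/7) (1/3) (y_odd_coeff s) (t_odd_coeff s)
      (s * (s^2 + s + 7)) (dy_dt s) = 2 * dy_dt' s / t_slope s"
    using nondeg t_chart_derivatives(2)[OF chart \<open>\<tau> \<in> T\<close>]
    by (intro PVI_odd_part_dy_dt dens) (auto simp: s_def)
  have "PVI_rhs (2/7) (2/7) (2/7) (1/3) \<tau> y (dy_dt s)
      = u * PVI_odd_part (2/7) (2/7) (1/3) (y_odd_coeff s) (t_odd_coeff s) (s * (s^2 + s + 7))
          (dy_dt s)"
    by (rule PVI_rhs_odd[OF u2 u0 nondeg(3,4,1,2,5) y \<tau>])
  then show "deriv (deriv (\<lambda>\<tau>. y_fun (S \<tau>) (U \<tau>))) \<tau> = PVI_rhs (2/7) (2/7) (2/7) (1/3) \<tau>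
      (y_fun (S \<tau>) (U \<tau>)) (deriv (\<lambda>\<tau>. y_fun (S \<tau>) (U \<tau>)) \<tau>)"
    unfolding t_chart_second_derivative[OF chart \<open>\<tau> \<in> T\<close>]
      DERIV_imp_deriv[OF t_chart_derivatives(4)[OF chart \<open>\<tau> \<in> T\<close>]] odd_part
    by (simp add: s_def u_def y_def)
qed

section \<open>The degree of \<open>t\<close>\<close>

definition t_num_sq_poly :: "complex poly" where
  "t_num_sq_poly = [:614656, 12743136, 77394177, 125780088, 139381344, 100538928, 55280652,
     22584744, 7439040, 2016448, 380646, 49032, -3360, -3024, -756, -168, 0, 0, 1:]"

definition t_den_sq_cofactor :: "complex poly" where
  "t_den_sq_cofactor = [:0, 64012032, 283481856, 525159936, 554086656, 398442240, 219469824,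
     92752128, 30046464, 7838208, 1306368, 186624:]"

lemma poly_t_num_sq_poly: "poly t_num_sq_poly z = t_num z ^ 2"
  unfolding t_num_sq_poly_def t_num_def by simp algebra

lemma poly_t_den_sq_cofactor: "poly t_den_sq_cofactor z = 186624 * z * (z + 1)^4 * (z^2 + z + 7)^3"
  unfolding t_den_sq_cofactor_def by simp algebra

lemma t_den_sq: "t_den z ^ 2 = poly t_den_sq_cofactor z * (z * (z^2 + z + 7))"
  unfolding poly_t_den_sq_cofactor t_den_def by algebra

lemma t_num_nonzero_at_cofactor_roots:
  assumes "poly t_den_sq_cofactor z = 0"
  shows "t_num z \<noteq> 0"
proof -
  have "z = 0 \<or> z = -1 \<or> z^2 + z + 7 = 0"
    using assms unfolding poly_t_den_sq_cofactor by (auto simp: add_eq_0_iff2)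
  moreover have "t_num 0 \<noteq> 0" "t_num (-1) \<noteq> 0" unfolding t_num_def by simp_all
  moreover have "t_num z \<noteq> 0" if "z^2 + z + 7 = 0"
  proof
    assume "t_num z = 0"
    have "t_num z = (z^2 + z + 7)
        * (z^7 - z^6 - 6 * z^5 - 71 * z^4 - 265 * z^3 - 750 * z^2 - 2603 * z + 617)
        + 9477 * z - 5103"
      unfolding t_num_def by algebra
    then have "9477 * z - 5103 = 0" using \<open>t_num z = 0\<close> that by simp
    then show False using that by algebra
  qed
  ultimately show ?thesis by auto
qed

lemma t_num_t_den_wronskian_nonzero:
  "pderiv t_num_sq_poly * t_den_sq_cofactor - t_num_sq_poly * pderiv t_den_sq_cofactor \<noteq> 0"
proof -
  have "poly (pderiv t_num_sq_poly * t_den_sq_cofactor - t_num_sq_poly * pderiv t_den_sq_cofactor) 0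
    \<noteq> 0"
    unfolding t_num_sq_poly_def t_den_sq_cofactor_def by (simp add: poly_0_coeff_0 coeff_pderiv)
  then show ?thesis by (metis poly_0)
qed

lemma t_fiber_eq:
  "t_fiber c = {(s, u). u^2 = s * (s^2 + s + 7) \<and> t_den s \<noteq> 0 \<and> t_num s * u = (1/2 - c) * t_den s}"
  unfolding t_fiber_def on_Pi_def t_fun_def by (auto simp: field_simps)

lemma card_t_fiber:
  assumes "c \<noteq> 1/2"
    and sqfree: "rsquarefree (t_num_sq_poly - smult ((1/2 - c)^2) t_den_sq_cofactor)"
  shows "card (t_fiber c) = 18"
proof -
  let ?Q = "t_num_sq_poly - smult ((1/2 - c)^2) t_den_sq_cofactor"
  have "bij_betw fst (t_fiber c) {s. t_num s ^ 2 = (1/2 - c)^2 * poly t_den_sq_cofactor s}"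
    unfolding t_fiber_eq using \<open>c \<noteq> 1/2\<close>
    by (intro bij_betw_fst_odd_fiber t_den_sq t_num_nonzero_at_cofactor_roots)
      (auto simp: poly_t_den_sq_cofactor)
  then have "card (t_fiber c) = card {z. poly ?Q z = 0}"
    by (simp add: bij_betw_same_card poly_t_num_sq_poly)
  also have "\<dots> = degree ?Q" by (rule card_roots_rsquarefree[OF sqfree])
  also have "\<dots> = 18"
  proof -
    have "degree (- smult ((1/2 - c)^2) t_den_sq_cofactor) < degree t_num_sq_poly"
      using degree_smult_le[of "(1/2 - c)^2" t_den_sq_cofactor]
      unfolding t_num_sq_poly_def t_den_sq_cofactor_def by simp
    then show ?thesis
      using degree_add_eq_left unfolding t_num_sq_poly_def by fastforce
  qed
  finally show ?thesis .
qed

lemma finite_t_fiber_card_ne_18: "finite {c. card (t_fiber c) \<noteq> 18}"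
proof (rule finite_subset)
  let ?K = "{k. \<not> rsquarefree (t_num_sq_poly - smult k t_den_sq_cofactor)}"
  show "{c. card (t_fiber c) \<noteq> 18} \<subseteq> insert (1/2) {c. (1/2 - c)^2 \<in> ?K}"
    using card_t_fiber by blast
  have "finite ?K"
    using t_num_nonzero_at_cofactor_roots t_num_t_den_wronskian_nonzero
    by (intro finite_non_rsquarefree_pencil) (auto simp: poly_t_num_sq_poly)
  then show "finite (insert (1/2) {c. (1/2 - c)^2 \<in> ?K})"
    using finite_preimage_shifted_square by blast
qed

theorem mainTheorem14:
  shows "(\<forall>T S U. open T \<and> S holomorphic_on T \<and> U holomorphic_on T \<and>
            (\<forall>\<tau>\<in>T. on_Pi (S \<tau>) (U \<tau>) \<and> y_den (S \<tau>) \<noteq> 0 \<and> t_den (S \<tau>) \<noteq> 0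
                     \<and> t_fun (S \<tau>) (U \<tau>) = \<tau>)
          \<longrightarrow> solves_PVI_on (2/7) (2/7) (2/7) (1/3) (\<lambda>\<tau>. y_fun (S \<tau>) (U \<tau>)) T)
       \<and> finite {c. card (t_fiber c) \<noteq> 18}"
  using y_fun_solves_PVI finite_t_fiber_card_ne_18 unfolding t_chart_def by blast

end
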